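(* Let $\sigma(x)=\sum_{k=0}^\infty\sigma_kL_k(x)$ on $I=(-1,1)$, and for $m,n\ge2$ let $a^{(0)}_{m,n}:=\int_{-1}^1\sigma(x)\,\eta_m(x)\,\eta_n(x)\,dx$. If there exist $\eta>0$ and a constant $C_\eta>0$ depending only on $\eta$ such that $|\sigma_k|\le C_\eta e^{-\eta k}$ for all $k\ge0$, then $$|a^{(0)}_{m,n}|\le Ce^{-\eta|n-m|}\qquad\forall\, n,m\ge2,$$ where $C$ is a constant depending only on $\eta$.
   Context: $I=(-1,1)$. $L_k$ denotes the Legendre polynomial of degree $k$ normalized by $L_k(1)=1$. The Babuška–Shen basis is $\eta_k(x)=\frac{1}{\sqrt{4k-2}}(L_{k-2}(x)-L_k(x))$, $k\ge2$. *)

theory Defs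
  imports "HOL-Analysis.Analysis"
begin

text \<open>Legendre polynomials normalised by L_k(1) = 1, via Bonnet's recurrence
  (n+2) L_{n+2}(x) = (2n+3) x L_{n+1}(x) - (n+1) L_n(x).\<close>
fun legendre :: "nat \<Rightarrow> real \<Rightarrow> real" where
  "legendre 0 x = 1"
| "legendre (Suc 0) x = x"
| "legendre (Suc (Suc n)) x =
     ((2 * real n + 3) * x * legendre (Suc n) x - (real n + 1) * legendre n x) / (real n + 2)"

definition bs_eta :: "nat \<Rightarrow> real \<Rightarrow> real" where
  "bs_eta k x = (legendre (k - 2) x - legendre k x) / sqrt (4 * real k - 2)"

definition legendre_series :: "(nat \<Rightarrow> real) \<Rightarrow> real \<Rightarrow> real" where
  "legendre_series s x = (\<Sum>k. s k * legendre k x)"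

definition a0 :: "(nat \<Rightarrow> real) \<Rightarrow> nat \<Rightarrow> nat \<Rightarrow> real" where
  "a0 s m n = integral {-1..1} (\<lambda>x. legendre_series s x * bs_eta m x * bs_eta n x)"

end

theory Submission
  imports Defs "HOL-Computational_Algebra.Polynomial"
begin

text \<open>Each \<open>\<eta>\<^sub>n\<close> is a polynomial of degree \<open>n\<close> in the span of \<open>L\<^sub>n\<^sub>-\<^sub>2\<close> and \<open>L\<^sub>n\<close>, hence
  orthogonal to every polynomial of degree less than \<open>n - 2\<close>. For \<open>m \<le> n\<close> the product
  \<open>L\<^sub>k \<eta>\<^sub>m\<close> has degree \<open>k + m\<close>, so the terms of \<open>\<sigma>\<close> with \<open>k < n - m - 2\<close> do not contribute
  to \<open>a\<^sub>m\<^sub>,\<^sub>n\<close>. Since \<open>|L\<^sub>k| \<le> 1\<close> and \<open>|\<eta>\<^sub>m| \<le> 1\<close> on \<open>[-1,1]\<close>, the rest is bounded by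
  twice the tail of the geometric series \<open>C\<^sub>\<eta> \<Sum> e\<^sup>-\<^sup>\<eta>\<^sup>k\<close> from index \<open>n - m - 2\<close> on.

  The bound \<open>|L\<^sub>k| \<le> 1\<close> comes from \<open>L\<^sub>k\<^sup>2 + (1 - x\<^sup>2) L\<^sub>k'\<^sup>2 / (k(k+1))\<close>: by Legendre's
  differential equation its derivative is \<open>2x L\<^sub>k'\<^sup>2 / (k(k+1))\<close>, so it is largest at \<open>\<plusminus>1\<close>,
  where it equals \<open>1\<close>.\<close>

fun legendre_poly :: "nat \<Rightarrow> real poly" where
  "legendre_poly 0 = 1"
| "legendre_poly (Suc 0) = [:0, 1:]"
| "legendre_poly (Suc (Suc n)) = smult (1 / (real n + 2))
     (smult (2 * real n + 3) ([:0, 1:] * legendre_poly (Suc n)) - smult (real n + 1) (legendre_poly n))"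

lemma poly_legendre_poly: "poly (legendre_poly n) x = legendre n x"
  by (induction n rule: legendre_poly.induct) (simp_all add: field_simps)

lemma legendre_eq_poly: "legendre n = poly (legendre_poly n)"
  by (simp add: fun_eq_iff poly_legendre_poly)

lemma degree_legendre_poly: "degree (legendre_poly n) \<le> n"
proof (induction n rule: legendre_poly.induct)
  case (3 n)
  have "degree ([:0, 1:] * legendre_poly (Suc n)) \<le> Suc (Suc n)"
    using degree_mult_le[of "[:0, 1:]" "legendre_poly (Suc n)"] 3 by simp
  moreover have "degree (legendre_poly n) \<le> Suc (Suc n)" using 3 by simp
  ultimately show ?case
    unfolding legendre_poly.simps
    by (intro order.trans[OF degree_smult_le] degree_diff_le order.trans[OF degree_smult_le])
qed auto

lemma legendre_at_1: "legendre n 1 = 1"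
  and legendre_at_neg_1: "legendre n (-1) = (-1) ^ n"
  by (induction n rule: legendre_poly.induct) (simp_all add: field_simps)

subsection \<open>Derivatives and Legendre's differential equation\<close>

definition legendre_deriv :: "nat \<Rightarrow> real \<Rightarrow> real" where
  "legendre_deriv n x = poly (pderiv (legendre_poly n)) x"

definition legendre_deriv2 :: "nat \<Rightarrow> real \<Rightarrow> real" where
  "legendre_deriv2 n x = poly (pderiv (pderiv (legendre_poly n))) x"

lemma has_real_derivative_legendre: "(legendre n has_real_derivative legendre_deriv n x) (at x)"
  unfolding legendre_eq_poly legendre_deriv_def by (rule poly_DERIV)

lemma has_real_derivative_legendre_deriv:
  "(legendre_deriv n has_real_derivative legendre_deriv2 n x) (at x)"
proof -
  have "legendre_deriv n = poly (pderiv (legendre_poly n))"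
    by (simp add: fun_eq_iff legendre_deriv_def)
  then show ?thesis unfolding legendre_deriv2_def by (metis poly_DERIV)
qed

lemma legendre_deriv_recurrence:
  "legendre_deriv (Suc (Suc n)) x = ((2 * real n + 3) * (legendre (Suc n) x + x * legendre_deriv (Suc n) x)
     - (real n + 1) * legendre_deriv n x) / (real n + 2)"
  by (simp add: legendre_deriv_def pderiv_smult pderiv_diff pderiv_mult pderiv_pCons
      poly_legendre_poly field_simps)

lemma legendre_deriv_identities:
  "x * legendre_deriv (Suc n) x - legendre_deriv n x = (real n + 1) * legendre (Suc n) x
   \<and> legendre_deriv (Suc n) x - x * legendre_deriv n x = (real n + 1) * legendre n x
   \<and> (x\<^sup>2 - 1) * legendre_deriv (Suc n) x = (real n + 1) * (x * legendre (Suc n) x - legendre n x)"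
proof (induction n)
  case 0
  then show ?case by (simp add: legendre_deriv_def pderiv_pCons power2_eq_square)
next
  case (Suc n)
  let ?D = "legendre_deriv" and ?L = "legendre"
  from Suc have A: "x * ?D (Suc n) x - ?D n x = (real n + 1) * ?L (Suc n) x"
    and C: "(x\<^sup>2 - 1) * ?D (Suc n) x = (real n + 1) * (x * ?L (Suc n) x - ?L n x)" by auto
  have B: "?D (Suc (Suc n)) x - x * ?D (Suc n) x = (real n + 2) * ?L (Suc n) x"
    using A by (simp add: legendre_deriv_recurrence field_simps)
  have "x * ?D (Suc (Suc n)) x - ?D (Suc n) x
      = (x\<^sup>2 - 1) * ?D (Suc n) x + (real n + 2) * x * ?L (Suc n) x"
    using B by (simp add: algebra_simps power2_eq_square)
  also have "\<dots> = (real n + 2) * ?L (Suc (Suc n)) x"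
    unfolding C by (simp add: field_simps)
  finally have A': "x * ?D (Suc (Suc n)) x - ?D (Suc n) x = (real n + 2) * ?L (Suc (Suc n)) x" .
  have "(x\<^sup>2 - 1) * ?D (Suc (Suc n)) x = x * (x * ?D (Suc (Suc n)) x) - ?D (Suc (Suc n)) x"
    by (simp add: algebra_simps power2_eq_square)
  also have "\<dots> = (real n + 2) * (x * ?L (Suc (Suc n)) x - ?L (Suc n) x)"
    using A' B by (simp add: algebra_simps)
  finally show ?case using A' B by (simp add: add.commute)
qed

lemma legendre_poly_deriv_identity:
  "[:-1, 0, 1:] * pderiv (legendre_poly (Suc n))
     = smult (real n + 1) ([:0, 1:] * legendre_poly (Suc n) - legendre_poly n)"
proof (rule poly_eq_poly_eq_iff[THEN iffD1], rule ext)
  fix x :: real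
  have "poly ([:-1, 0, 1:] * pderiv (legendre_poly (Suc n))) x
      = (x\<^sup>2 - 1) * legendre_deriv (Suc n) x"
    by (simp add: legendre_deriv_def power2_eq_square algebra_simps)
  also have "\<dots> = (real n + 1) * (x * legendre (Suc n) x - legendre n x)"
    using legendre_deriv_identities[of x n] by blast
  finally show "poly ([:-1, 0, 1:] * pderiv (legendre_poly (Suc n))) x
      = poly (smult (real n + 1) ([:0, 1:] * legendre_poly (Suc n) - legendre_poly n)) x"
    by (simp add: poly_legendre_poly)
qed

lemma legendre_ode:
  "(x\<^sup>2 - 1) * legendre_deriv2 (Suc n) x + 2 * x * legendre_deriv (Suc n) x
     = (real n + 1) * (real n + 2) * legendre (Suc n) x"
proof -
  have "(x\<^sup>2 - 1) * legendre_deriv2 (Suc n) x + 2 * x * legendre_deriv (Suc n) x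
      = poly (pderiv ([:-1, 0, 1:] * pderiv (legendre_poly (Suc n)))) x"
  proof -
    have "poly [:-1, 0, 1:] x = x\<^sup>2 - 1" "poly (pderiv [:-1, 0, 1:]) x = 2 * x"
      by (simp_all add: pderiv_pCons power2_eq_square)
    then show ?thesis
      unfolding pderiv_mult poly_add poly_mult legendre_deriv_def legendre_deriv2_def by simp
  qed
  also have "\<dots> = (real n + 1) * (legendre (Suc n) x + x * legendre_deriv (Suc n) x - legendre_deriv n x)"
    unfolding legendre_poly_deriv_identity
    by (simp add: pderiv_mult pderiv_smult pderiv_diff pderiv_pCons legendre_deriv_def
        poly_legendre_poly algebra_simps)
  also have "\<dots> = (real n + 1) * (real n + 2) * legendre (Suc n) x"
  proof -
    have "legendre_deriv n x = x * legendre_deriv (Suc n) x - (real n + 1) * legendre (Suc n) x"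
      using legendre_deriv_identities[of x n] by simp
    then show ?thesis by (simp only:) (simp add: algebra_simps)
  qed
  finally show ?thesis .
qed

lemma abs_legendre_le_1:
  assumes "-1 \<le> x" "x \<le> 1"
  shows "\<bar>legendre n x\<bar> \<le> 1"
proof (cases n)
  case 0
  then show ?thesis by simp
next
  case (Suc m)
  let ?L = "legendre (Suc m)" and ?D = "legendre_deriv (Suc m)"
  define c where "c = (real m + 1) * (real m + 2)"
  have c: "c > 0" unfolding c_def by simp
  define f where "f y = (?L y)\<^sup>2 + (1 - y\<^sup>2) * (?D y)\<^sup>2 / c" for y
  define f' where "f' y = 2 * y * (?D y)\<^sup>2 / c" for y
  have f_deriv: "(f has_real_derivative f' y) (at y)" for y
  proof -
    have "(f has_real_derivative 2 * ?L y * ?D y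
        + ((- (2 * y)) * (?D y)\<^sup>2 + (1 - y\<^sup>2) * (2 * ?D y * legendre_deriv2 (Suc m) y)) / c) (at y)"
      unfolding f_def using c
      by (auto intro!: derivative_eq_intros has_real_derivative_legendre
          has_real_derivative_legendre_deriv simp: power2_eq_square)
    moreover have "2 * ?L y * ?D y
        + ((- (2 * y)) * (?D y)\<^sup>2 + (1 - y\<^sup>2) * (2 * ?D y * legendre_deriv2 (Suc m) y)) / c = f' y"
    proof -
      have "(1 - y\<^sup>2) * legendre_deriv2 (Suc m) y = 2 * y * ?D y - c * ?L y"
        using legendre_ode[of y m] by (simp add: c_def algebra_simps)
      then have "(1 - y\<^sup>2) * (2 * ?D y * legendre_deriv2 (Suc m) y) = 2 * ?D y * (2 * y * ?D y - c * ?L y)"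
        by (metis mult.left_commute)
      then show ?thesis using c unfolding f'_def by (simp add: field_simps power2_eq_square)
    qed
    ultimately show ?thesis by simp
  qed
  have f_pm1: "f 1 = 1" "f (-1) = 1"
    by (simp_all add: f_def legendre_at_1 legendre_at_neg_1 flip: power_mult)
  have "f x \<le> 1"
  proof (cases "x \<ge> 0")
    case True
    have "f x \<le> f 1"
      by (rule deriv_nonneg_imp_mono[of x 1 f f'])
        (use f_deriv c True assms in \<open>auto simp: f'_def\<close>)
    then show ?thesis using f_pm1 by simp
  next
    case False
    have "f x \<le> f (-1)"
    proof (rule deriv_nonpos_imp_antimono[of "-1" x f f'])
      fix y assume "y \<in> {-1..x}"
      then have "2 * y * (?D y)\<^sup>2 \<le> 0" using False by (simp add: mult_nonpos_nonneg)
      then show "f' y \<le> 0" unfolding f'_def using c by (simp add: divide_nonpos_pos)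
    qed (use f_deriv assms in auto)
    then show ?thesis using f_pm1 by simp
  qed
  moreover have "(1 - x\<^sup>2) * (?D x)\<^sup>2 / c \<ge> 0"
    using c abs_square_le_1[of x] assms by simp
  ultimately have "(?L x)\<^sup>2 \<le> 1" unfolding f_def by linarith
  then show ?thesis using Suc by (simp add: abs_square_le_1)
qed

subsection \<open>Orthogonality\<close>

lemma legendre_deriv_has_integral:
  "(legendre_deriv n has_integral (legendre n 1 - legendre n (-1))) {-1..1}"
proof (rule fundamental_theorem_of_calculus)
  fix x :: real
  show "(legendre n has_vector_derivative legendre_deriv n x) (at x within {-1..1})"
    using has_real_derivative_legendre[of n x]
    by (simp add: has_real_derivative_iff_has_vector_derivative has_vector_derivative_at_within)
qed simp

lemma legendre_Suc_has_integral_0: "(legendre (Suc k) has_integral 0) {-1..1}"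
proof -
  have "legendre_deriv (Suc (Suc k)) x - legendre_deriv k x = (2 * real k + 3) * legendre (Suc k) x" for x
  proof -
    have "x * legendre_deriv (Suc k) x - legendre_deriv k x = (real k + 1) * legendre (Suc k) x"
      "legendre_deriv (Suc (Suc k)) x - x * legendre_deriv (Suc k) x = (real k + 2) * legendre (Suc k) x"
      using legendre_deriv_identities[of x k] legendre_deriv_identities[of x "Suc k"] by auto
    then show ?thesis by (simp add: algebra_simps)
  qed
  moreover have "((\<lambda>x. legendre_deriv (Suc (Suc k)) x - legendre_deriv k x) has_integral
      (legendre (Suc (Suc k)) 1 - legendre (Suc (Suc k)) (-1) - (legendre k 1 - legendre k (-1)))) {-1..1}"
    by (intro has_integral_diff legendre_deriv_has_integral)
  ultimately have "((\<lambda>x. (2 * real k + 3) * legendre (Suc k) x) has_integral 0) {-1..1}"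
    by (simp only: legendre_at_1 legendre_at_neg_1) simp
  from has_integral_mult_right[OF this, of "inverse (2 * real k + 3)"] show ?thesis
    by (simp add: mult.assoc[symmetric])
qed

lemma monomial_legendre_has_integral_0:
  "j < n \<Longrightarrow> ((\<lambda>x. x ^ j * legendre n x) has_integral 0) {-1..1}"
proof (induction j arbitrary: n)
  case 0
  then obtain k where "n = Suc k" by (cases n) auto
  then show ?case using legendre_Suc_has_integral_0[of k] by simp
next
  case (Suc j)
  then obtain k where k: "n = Suc k" by (cases n) auto
  have "((\<lambda>x. ((real k + 2) * (x ^ j * legendre (Suc (Suc k)) x) + (real k + 1) * (x ^ j * legendre k x))
      / (2 * real k + 3)) has_integral 0) {-1..1}"
    using Suc.prems k
    by (intro has_integral_divide[where y = 0, simplified] has_integral_add[where k = 0 and l = 0, simplified]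
        has_integral_mult_right[where y = 0, simplified] Suc.IH) auto
  moreover have "((real k + 2) * (x ^ j * legendre (Suc (Suc k)) x) + (real k + 1) * (x ^ j * legendre k x))
      / (2 * real k + 3) = x ^ Suc j * legendre n x" for x
  proof -
    have "(real k + 2) * legendre (Suc (Suc k)) x + (real k + 1) * legendre k x
        = (2 * real k + 3) * x * legendre (Suc k) x"
      by (simp add: field_simps)
    then have "x ^ j * ((real k + 2) * legendre (Suc (Suc k)) x + (real k + 1) * legendre k x)
        = (2 * real k + 3) * (x ^ Suc j * legendre n x)"
      unfolding k by simp
    then have "(real k + 2) * (x ^ j * legendre (Suc (Suc k)) x) + (real k + 1) * (x ^ j * legendre k x)
        = (2 * real k + 3) * (x ^ Suc j * legendre n x)"
      by (simp only: distrib_left mult.left_commute)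
    then show ?thesis by (simp add: add_pos_pos)
  qed
  ultimately show ?case by simp
qed

lemma poly_legendre_has_integral_0:
  assumes "degree p < n"
  shows "((\<lambda>x. poly p x * legendre n x) has_integral 0) {-1..1}"
proof -
  have "((\<lambda>x. \<Sum>i\<le>degree p. coeff p i * (x ^ i * legendre n x))
      has_integral (\<Sum>i\<le>degree p. coeff p i * 0)) {-1..1}"
    using assms by (intro has_integral_sum has_integral_mult_right monomial_legendre_has_integral_0) auto
  then show ?thesis by (simp add: poly_altdef sum_distrib_right mult.assoc)
qed

definition bs_eta_poly :: "nat \<Rightarrow> real poly" where
  "bs_eta_poly m = smult (1 / sqrt (4 * real m - 2)) (legendre_poly (m - 2) - legendre_poly m)"

lemma poly_bs_eta_poly: "poly (bs_eta_poly m) x = bs_eta m x"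
  by (simp add: bs_eta_poly_def bs_eta_def poly_legendre_poly)

lemma degree_bs_eta_poly: "degree (bs_eta_poly m) \<le> m"
proof -
  have "degree (legendre_poly (m - 2) - legendre_poly m) \<le> m"
    using degree_legendre_poly[of "m - 2"] degree_legendre_poly[of m]
    by (intro degree_diff_le) auto
  then show ?thesis unfolding bs_eta_poly_def using degree_smult_le order.trans by blast
qed

lemma legendre_bs_eta_has_integral_0:
  assumes "k + m + 2 < n"
  shows "((\<lambda>x. legendre k x * bs_eta m x * bs_eta n x) has_integral 0) {-1..1}"
proof -
  define p where "p = legendre_poly k * bs_eta_poly m"
  have "degree p < n - 2"
    using degree_mult_le[of "legendre_poly k" "bs_eta_poly m"] degree_legendre_poly[of k]
      degree_bs_eta_poly[of m] assms
    unfolding p_def by linarith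
  then have "((\<lambda>x. (poly p x * legendre (n - 2) x - poly p x * legendre n x) / sqrt (4 * real n - 2))
      has_integral 0) {-1..1}"
    using assms has_integral_divide[OF has_integral_diff[OF
          poly_legendre_has_integral_0 poly_legendre_has_integral_0]]
    by fastforce
  moreover have "(poly p x * legendre (n - 2) x - poly p x * legendre n x) / sqrt (4 * real n - 2)
      = legendre k x * bs_eta m x * bs_eta n x" for x
    by (simp add: p_def poly_legendre_poly poly_bs_eta_poly bs_eta_def[of n] algebra_simps
        diff_divide_distrib)
  ultimately show ?thesis by simp
qed

lemma legendre_sum_bs_eta_has_integral_0:
  "((\<lambda>x. (\<Sum>k < max m n - min m n - 2. s k * legendre k x) * bs_eta m x * bs_eta n x)
    has_integral 0) {-1..1}"
proof -
  let ?K = "max m n - min m n - 2"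
  have summand: "((\<lambda>x. legendre k x * bs_eta m x * bs_eta n x) has_integral 0) {-1..1}"
    if "k < ?K" for k
  proof (cases "m \<le> n")
    case True
    then show ?thesis using that by (intro legendre_bs_eta_has_integral_0) auto
  next
    case False
    then have "((\<lambda>x. legendre k x * bs_eta n x * bs_eta m x) has_integral 0) {-1..1}"
      using that by (intro legendre_bs_eta_has_integral_0) auto
    then show ?thesis by (simp add: mult_ac)
  qed
  have "((\<lambda>x. \<Sum>k<?K. s k * (legendre k x * bs_eta m x * bs_eta n x))
      has_integral (\<Sum>k<?K. s k * 0)) {-1..1}"
    by (intro has_integral_sum has_integral_mult_right summand) auto
  then show ?thesis by (simp add: sum_distrib_right mult.assoc)
qed

subsection \<open>Bounds\<close>

lemma abs_bs_eta_le_1: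
  assumes "m \<ge> 2" "-1 \<le> x" "x \<le> 1"
  shows "\<bar>bs_eta m x\<bar> \<le> 1"
proof -
  have "\<bar>legendre (m - 2) x - legendre m x\<bar> \<le> 2"
    using abs_legendre_le_1[OF assms(2,3), of "m - 2"] abs_legendre_le_1[OF assms(2,3), of m]
    by linarith
  moreover have "2 \<le> sqrt (4 * real m - 2)"
    using real_sqrt_le_mono[of 4 "4 * real m - 2"] assms(1) by simp
  ultimately show ?thesis
    unfolding bs_eta_def abs_divide using assms(1) by (subst divide_le_eq_1_pos) auto
qed

lemma legendre_series_tail_bound:
  fixes s :: "nat \<Rightarrow> real"
  assumes q: "0 < q" "q < 1" and s: "\<And>k. \<bar>s k\<bar> \<le> c * q ^ k" and x: "-1 \<le> x" "x \<le> 1"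
  shows "\<bar>legendre_series s x - (\<Sum>k<K. s k * legendre k x)\<bar> \<le> c * q ^ K / (1 - q)"
proof -
  define f where "f k = s k * legendre k x" for k
  have f_bound: "\<bar>f k\<bar> \<le> c * q ^ k" for k
  proof -
    have "\<bar>f k\<bar> \<le> \<bar>s k\<bar>"
      using abs_legendre_le_1[OF x, of k] by (simp add: f_def abs_mult mult_left_le)
    then show ?thesis using s[of k] by linarith
  qed
  have geometric: "(\<lambda>i. c * q ^ K * q ^ i) sums (c * q ^ K / (1 - q))"
    using q sums_mult[OF geometric_sums, of q "c * q ^ K"] by simp
  have "summable f"
    by (rule summable_comparison_test'[of "\<lambda>k. c * q ^ k" 0])
      (use q f_bound in \<open>auto intro: summable_mult summable_geometric\<close>)
  then have "legendre_series s x = (\<Sum>i. f (i + K)) + (\<Sum>k<K. f k)"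
    unfolding legendre_series_def f_def[symmetric] by (rule suminf_split_initial_segment)
  then have tail: "legendre_series s x - (\<Sum>k<K. s k * legendre k x) = (\<Sum>i. f (i + K))"
    by (simp add: f_def)
  have "norm (\<Sum>i. f (i + K)) \<le> (\<Sum>i. c * q ^ K * q ^ i)"
  proof (rule norm_suminf_le)
    show "norm (f (i + K)) \<le> c * q ^ K * q ^ i" for i
      using f_bound[of "i + K"] by (simp add: power_add mult_ac)
  qed (use geometric sums_summable in blast)
  also have "\<dots> = c * q ^ K / (1 - q)" using geometric sums_unique by fastforce
  finally show ?thesis unfolding tail by simp
qed

lemma abs_a0_le:
  fixes s :: "nat \<Rightarrow> real"
  assumes q: "0 < q" "q < 1" and s: "\<And>k. \<bar>s k\<bar> \<le> c * q ^ k" and mn: "m \<ge> 2" "n \<ge> 2"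
  shows "\<bar>a0 s m n\<bar> \<le> 2 * c / (q\<^sup>2 * (1 - q)) * q ^ (max m n - min m n)"
proof -
  define d where "d = max m n - min m n"
  define K where "K = d - 2"
  define B where "B = c * q ^ K / (1 - q)"
  have "c \<ge> 0" using s[of 0] by (metis abs_ge_zero mult.right_neutral order_trans power_0)
  then have B_nonneg: "B \<ge> 0" using q by (simp add: B_def)
  have "q ^ K * q\<^sup>2 \<le> q ^ d"
    unfolding K_def power_add[symmetric] using q by (intro power_decreasing) auto
  then have "q ^ K \<le> q ^ d / q\<^sup>2" using q by (simp add: field_simps)
  then have "2 * c / (1 - q) * q ^ K \<le> 2 * c / (1 - q) * (q ^ d / q\<^sup>2)"
    using \<open>c \<ge> 0\<close> q by (intro mult_left_mono) auto
  then have B_le: "2 * B \<le> 2 * c / (q\<^sup>2 * (1 - q)) * q ^ d"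
    by (simp add: B_def field_simps)
  define F where "F x = legendre_series s x * bs_eta m x * bs_eta n x" for x
  define G where "G x = (\<Sum>k<K. s k * legendre k x) * bs_eta m x * bs_eta n x" for x
  have "\<bar>a0 s m n\<bar> \<le> 2 * B"
  proof (cases "F integrable_on {-1..1}")
    case False
    then have "a0 s m n = 0" unfolding a0_def F_def[symmetric] by (rule not_integrable_integral)
    then show ?thesis using B_nonneg by simp
  next
    case True
    have "(F has_integral a0 s m n) {-1..1}"
      using True unfolding a0_def F_def[symmetric] by (rule integrable_integral)
    moreover have "(G has_integral 0) {-1..1}"
      unfolding G_def K_def d_def by (rule legendre_sum_bs_eta_has_integral_0)
    ultimately have FG: "((\<lambda>x. F x - G x) has_integral a0 s m n - 0) (cbox (-1) 1)"
      unfolding cbox_interval by (rule has_integral_diff)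
    have FG_bound: "norm (F x - G x) \<le> B" if "x \<in> cbox (-1) 1" for x
    proof -
      have x: "-1 \<le> x" "x \<le> 1" using that by auto
      have "\<bar>F x - G x\<bar>
          = \<bar>legendre_series s x - (\<Sum>k<K. s k * legendre k x)\<bar> * \<bar>bs_eta m x\<bar> * \<bar>bs_eta n x\<bar>"
        unfolding F_def G_def abs_mult[symmetric] by (simp add: algebra_simps)
      also have "\<dots> \<le> B * 1 * 1"
        using legendre_series_tail_bound[OF q s x, of K] abs_bs_eta_le_1[OF mn(1) x]
          abs_bs_eta_le_1[OF mn(2) x] B_nonneg
        unfolding B_def by (intro mult_mono) auto
      finally show ?thesis by simp
    qed
    show ?thesis
      using has_integral_bound[OF B_nonneg FG FG_bound] by (simp add: mult.commute)
  qed
  with B_le show ?thesis unfolding d_def by linarith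
qed

theorem mainTheorem3:
  fixes eta C_eta :: real
  assumes "eta > 0" and "C_eta > 0"
  shows "\<exists>C>0. \<forall>s :: nat \<Rightarrow> real.
           (\<forall>k. \<bar>s k\<bar> \<le> C_eta * exp (- eta * real k)) \<longrightarrow>
           (\<forall>m n. m \<ge> 2 \<longrightarrow> n \<ge> 2 \<longrightarrow>
              \<bar>a0 s m n\<bar> \<le> C * exp (- eta * \<bar>real n - real m\<bar>))"
proof -
  define q where "q = exp (- eta)"
  have q: "0 < q" "q < 1" using assms(1) by (auto simp: q_def)
  have exp_eq_power: "exp (- eta * real k) = q ^ k" for k
    unfolding q_def by (simp add: exp_of_nat_mult[symmetric] mult_ac)
  show ?thesis
  proof (intro exI[of _ "2 * C_eta / (q\<^sup>2 * (1 - q))"] conjI allI impI)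
    show "2 * C_eta / (q\<^sup>2 * (1 - q)) > 0" using assms(2) q by simp
    fix s :: "nat \<Rightarrow> real" and m n :: nat
    assume "\<forall>k. \<bar>s k\<bar> \<le> C_eta * exp (- eta * real k)" and mn: "m \<ge> 2" "n \<ge> 2"
    then have "\<And>k. \<bar>s k\<bar> \<le> C_eta * q ^ k" by (metis exp_eq_power)
    then have "\<bar>a0 s m n\<bar> \<le> 2 * C_eta / (q\<^sup>2 * (1 - q)) * q ^ (max m n - min m n)"
      using abs_a0_le[OF q _ mn] by blast
    also have "q ^ (max m n - min m n) = exp (- eta * \<bar>real n - real m\<bar>)"
      unfolding exp_eq_power[symmetric] by (cases "m \<le> n") (auto simp: of_nat_diff)
    finally show "\<bar>a0 s m n\<bar> \<le> 2 * C_eta / (q\<^sup>2 * (1 - q)) * exp (- eta * \<bar>real n - real m\<bar>)" .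
  qed
qed

end
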